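(* In the game described in the context, let $\mu\in\Pi_1^{SD}$ and $\nu\in\Pi_2^{SD}$ be essentially proper. Then (i) the pair $(\mu,\nu)$ is non-prolonging; and (ii) $\bar x(\mu)\ge\tilde x(\nu)$ componentwise, where $\bar x(\mu)$ and $\tilde x(\nu)$ are the unique solutions of $x=T_\mu x$ and $x=\tilde T_\nu x$, respectively.
   Context: Game model. $S=\{1,\dots,n\}$, $S_o=S\cup\{0\}$, $0$ an absorbing cost-free termination state. At $i\in S$ player I picks $\bar u\in\bar U(i)$, player II picks $\bar v\in\bar V(i)$, where $\bar U(i),\bar V(i)$ are compact subsets of complete separable metric spaces; an expected cost $c_i(\bar u,\bar v)\in\mathbb{R}$ is incurred by player I (reward to player II) and the state moves to $j\in S_o$ with probability $p_{ij}(\bar u,\bar v)$. Standing assumption: for all $i,j\in S$, $p_{ij}$ is continuous on $\bar U(i)\times\bar V(i)$, and $c_i$ is lower semicontinuous in $\bar u$ for fixed $\bar v$ and upper semicontinuous in $\bar v$ for fixed $\bar u$. For policies $\pi_1,\pi_2$ (history-dependent randomized), $x_i(\pi_1,\pi_2)=\liminf_{t\to\infty}E_{\pi_1\pi_2}[\sum_{k=0}^tc_{i_k}(\bar u_k,\bar v_k)\mid i_0=i]$. $\Pi_1^{SD}=\{\mu:\mu(i)\in\bar U(i)\}$, $\Pi_2^{SD}=\{\nu:\nu(i)\in\bar V(i)\}$. With $c(\mu,\nu)_i=c_i(\mu(i),\nu(i))$ and $P(\mu,\nu)_{ij}=p_{ij}(\mu(i),\nu(i))$, $i,j\in S$: $T_{\mu\nu}x=c(\mu,\nu)+P(\mu,\nu)x$,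 $T_\mu x=\sup_{\nu\in\Pi_2^{SD}}T_{\mu\nu}x$, $\tilde T_\nu x=\inf_{\mu\in\Pi_1^{SD}}T_{\mu\nu}x$ (componentwise). A pair of policies is prolonging if for some initial state the termination state is, with positive probability, never reached; otherwise non-prolonging. Essentially proper: $\mu\in\Pi_1^{SD}$ is essentially proper if there is $\nu\in\Pi_2^{SD}$ with $(\mu,\nu)$ non-prolonging and every $\nu\in\Pi_2^{SD}$ with $(\mu,\nu)$ prolonging has $x_i(\mu,\nu)=-\infty$ for some $i$. $\nu\in\Pi_2^{SD}$ is essentially proper if there is $\mu\in\Pi_1^{SD}$ with $(\mu,\nu)$ non-prolonging and every $\mu$ with $(\mu,\nu)$ prolonging has $x_i(\mu,\nu)=+\infty$ for some $i$. For essentially proper $\mu$ (resp. $\nu$) the equation $x=T_\mu x$ (resp. $x=\tilde T_\nu x$) has a unique solution in $\mathbb{R}^n$. *)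

theory Defs
  imports "HOL-Analysis.Analysis"
begin

text \<open>States S = the finite type 's (n = CARD('s)); the termination state 0 is kept
  implicit: p i j u v is the probability of moving from i to j in S, and the
  probability of moving to 0 is 1 - (sum over j of p i j u v).\<close>

definition lsc_on :: "'a::topological_space set \<Rightarrow> ('a \<Rightarrow> real) \<Rightarrow> bool" where
  "lsc_on A f \<longleftrightarrow> (\<forall>a\<in>A. \<forall>t. t < f a \<longrightarrow> (\<forall>\<^sub>F u in at a within A. t < f u))"

definition usc_on :: "'a::topological_space set \<Rightarrow> ('a \<Rightarrow> real) \<Rightarrow> bool" where
  "usc_on A f \<longleftrightarrow> (\<forall>a\<in>A. \<forall>t. f a < t \<longrightarrow> (\<forall>\<^sub>F u in at a within A. f u < t))"

definition game_model ::
  "('s::finite \<Rightarrow> 'u::polish_space set) \<Rightarrow> ('s \<Rightarrow> 'v::polish_space set)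
   \<Rightarrow> ('s \<Rightarrow> 's \<Rightarrow> 'u \<Rightarrow> 'v \<Rightarrow> real) \<Rightarrow> ('s \<Rightarrow> 'u \<Rightarrow> 'v \<Rightarrow> real) \<Rightarrow> bool" where
  "game_model U V p c \<longleftrightarrow>
     (\<forall>i. compact (U i) \<and> compact (V i)) \<and>
     (\<forall>i. \<forall>u\<in>U i. \<forall>v\<in>V i. (\<forall>j. 0 \<le> p i j u v) \<and> (\<Sum>j\<in>UNIV. p i j u v) \<le> 1) \<and>
     (\<forall>i j. continuous_on (U i \<times> V i) (\<lambda>(u, v). p i j u v)) \<and>
     (\<forall>i. \<forall>v\<in>V i. lsc_on (U i) (\<lambda>u. c i u v)) \<and>
     (\<forall>i. \<forall>u\<in>U i. usc_on (V i) (\<lambda>v. c i u v))"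

definition Pi_SD :: "('s \<Rightarrow> 'a set) \<Rightarrow> ('s \<Rightarrow> 'a) set" where
  "Pi_SD U = {\<mu>. \<forall>i. \<mu> i \<in> U i}"

definition Pmat :: "('s \<Rightarrow> 's \<Rightarrow> 'u \<Rightarrow> 'v \<Rightarrow> real) \<Rightarrow> ('s \<Rightarrow> 'u) \<Rightarrow> ('s \<Rightarrow> 'v) \<Rightarrow> 's \<Rightarrow> 's \<Rightarrow> real" where
  "Pmat p \<mu> \<nu> i j = p i j (\<mu> i) (\<nu> i)"

definition cvec :: "('s \<Rightarrow> 'u \<Rightarrow> 'v \<Rightarrow> real) \<Rightarrow> ('s \<Rightarrow> 'u) \<Rightarrow> ('s \<Rightarrow> 'v) \<Rightarrow> 's \<Rightarrow> real" where
  "cvec c \<mu> \<nu> i = c i (\<mu> i) (\<nu> i)"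

definition stepv :: "('s::finite \<Rightarrow> 's \<Rightarrow> real) \<Rightarrow> ('s \<Rightarrow> real) \<Rightarrow> 's \<Rightarrow> real" where
  "stepv P f = (\<lambda>i. \<Sum>j\<in>UNIV. P i j * f j)"

text \<open>Probability, starting from i, that the termination state is never reached:
  the limit (infimum of the decreasing sequence) of the probabilities
  (P^k 1)_i of not having terminated by time k.\<close>
definition nonterm_prob :: "('s::finite \<Rightarrow> 's \<Rightarrow> real) \<Rightarrow> 's \<Rightarrow> real" where
  "nonterm_prob P i = (INF k. (stepv P ^^ k) (\<lambda>_. 1) i)"

definition prolonging :: "('s::finite \<Rightarrow> 's \<Rightarrow> 'u \<Rightarrow> 'v \<Rightarrow> real) \<Rightarrow> ('s \<Rightarrow> 'u) \<Rightarrow> ('s \<Rightarrow> 'v) \<Rightarrow> bool" where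
  "prolonging p \<mu> \<nu> \<longleftrightarrow> (\<exists>i. nonterm_prob (Pmat p \<mu> \<nu>) i > 0)"

text \<open>x_i(mu,nu) = liminf_t E[sum_{k=0}^t c_{i_k}] = liminf_t sum_{k=0}^t (P^k c)_i.\<close>
definition cost :: "('s::finite \<Rightarrow> 's \<Rightarrow> 'u \<Rightarrow> 'v \<Rightarrow> real) \<Rightarrow> ('s \<Rightarrow> 'u \<Rightarrow> 'v \<Rightarrow> real)
    \<Rightarrow> ('s \<Rightarrow> 'u) \<Rightarrow> ('s \<Rightarrow> 'v) \<Rightarrow> 's \<Rightarrow> ereal" where
  "cost p c \<mu> \<nu> i =
     liminf (\<lambda>t. ereal (\<Sum>k\<le>t. (stepv (Pmat p \<mu> \<nu>) ^^ k) (cvec c \<mu> \<nu>) i))"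

definition T_pair :: "('s::finite \<Rightarrow> 's \<Rightarrow> 'u \<Rightarrow> 'v \<Rightarrow> real) \<Rightarrow> ('s \<Rightarrow> 'u \<Rightarrow> 'v \<Rightarrow> real)
    \<Rightarrow> ('s \<Rightarrow> 'u) \<Rightarrow> ('s \<Rightarrow> 'v) \<Rightarrow> ('s \<Rightarrow> real) \<Rightarrow> 's \<Rightarrow> real" where
  "T_pair p c \<mu> \<nu> x = (\<lambda>i. cvec c \<mu> \<nu> i + stepv (Pmat p \<mu> \<nu>) x i)"

definition T_mu :: "('s::finite \<Rightarrow> 'v set) \<Rightarrow> ('s \<Rightarrow> 's \<Rightarrow> 'u \<Rightarrow> 'v \<Rightarrow> real) \<Rightarrow> ('s \<Rightarrow> 'u \<Rightarrow> 'v \<Rightarrow> real)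
    \<Rightarrow> ('s \<Rightarrow> 'u) \<Rightarrow> ('s \<Rightarrow> real) \<Rightarrow> 's \<Rightarrow> real" where
  "T_mu V p c \<mu> x = (\<lambda>i. SUP \<nu>\<in>Pi_SD V. T_pair p c \<mu> \<nu> x i)"

definition T_nu :: "('s::finite \<Rightarrow> 'u set) \<Rightarrow> ('s \<Rightarrow> 's \<Rightarrow> 'u \<Rightarrow> 'v \<Rightarrow> real) \<Rightarrow> ('s \<Rightarrow> 'u \<Rightarrow> 'v \<Rightarrow> real)
    \<Rightarrow> ('s \<Rightarrow> 'v) \<Rightarrow> ('s \<Rightarrow> real) \<Rightarrow> 's \<Rightarrow> real" where
  "T_nu U p c \<nu> x = (\<lambda>i. INF \<mu>\<in>Pi_SD U. T_pair p c \<mu> \<nu> x i)"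

definition ess_proper1 :: "('s::finite \<Rightarrow> 'v set) \<Rightarrow> ('s \<Rightarrow> 's \<Rightarrow> 'u \<Rightarrow> 'v \<Rightarrow> real)
    \<Rightarrow> ('s \<Rightarrow> 'u \<Rightarrow> 'v \<Rightarrow> real) \<Rightarrow> ('s \<Rightarrow> 'u) \<Rightarrow> bool" where
  "ess_proper1 V p c \<mu> \<longleftrightarrow>
     (\<exists>\<nu>\<in>Pi_SD V. \<not> prolonging p \<mu> \<nu>) \<and>
     (\<forall>\<nu>\<in>Pi_SD V. prolonging p \<mu> \<nu> \<longrightarrow> (\<exists>i. cost p c \<mu> \<nu> i = -\<infinity>))"

definition ess_proper2 :: "('s::finite \<Rightarrow> 'u set) \<Rightarrow> ('s \<Rightarrow> 's \<Rightarrow> 'u \<Rightarrow> 'v \<Rightarrow> real)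
    \<Rightarrow> ('s \<Rightarrow> 'u \<Rightarrow> 'v \<Rightarrow> real) \<Rightarrow> ('s \<Rightarrow> 'v) \<Rightarrow> bool" where
  "ess_proper2 U p c \<nu> \<longleftrightarrow>
     (\<exists>\<mu>\<in>Pi_SD U. \<not> prolonging p \<mu> \<nu>) \<and>
     (\<forall>\<mu>\<in>Pi_SD U. prolonging p \<mu> \<nu> \<longrightarrow> (\<exists>i. cost p c \<mu> \<nu> i = \<infinity>))"

end

theory Submission
  imports Defs
begin

text \<open>For fixed points, T_pair \<mu> \<nu> xbar \<le> T_mu xbar = xbar and xtil = T_nu xtil \<le> T_pair \<mu> \<nu> xtil,
  so d = xbar - xtil satisfies P d \<le> d for P = P(\<mu>,\<nu>). Iterating, d \<ge> P^k d \<ge> -B P^k 1 with B = \<Sum>j |d j|, and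
  P^k 1 tends to 0 once (\<mu>,\<nu>) is non-prolonging.

  If (\<mu>,\<nu>) were prolonging, P would have a minimal closed class C, on which the Poisson equation
  h - P h = c - g holds. If g \<ge> 0, player II keeps \<nu> on C and plays elsewhere a reply \<nu>' that
  terminates against \<mu>: the new pair is still prolonging, but h, corrected outside C by a large
  multiple of the expected time to termination under (\<mu>,\<nu>'), is a Lyapunov function bounding
  its partial costs from below, contradicting the essential properness of \<mu>. If g < 0,
  player I argues symmetrically against \<nu>.\<close>

section \<open>Substochastic matrices\<close>

definition substochastic :: "('s::finite \<Rightarrow> 's \<Rightarrow> real) \<Rightarrow> bool" where
  "substochastic P \<longleftrightarrow> (\<forall>i j. 0 \<le> P i j) \<and> (\<forall>i. (\<Sum>j\<in>UNIV. P i j) \<le> 1)"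

lemma substochastic_nonneg: "substochastic P \<Longrightarrow> 0 \<le> P i j"
  by (simp add: substochastic_def)

lemma substochastic_row_sum_le: "substochastic P \<Longrightarrow> (\<Sum>j\<in>UNIV. P i j) \<le> 1"
  by (simp add: substochastic_def)

lemma abs_le_sum_abs: "\<bar>x j\<bar> \<le> (\<Sum>i\<in>UNIV. \<bar>x i\<bar>)" for x :: "'s::finite \<Rightarrow> real"
  by (rule member_le_sum) auto

lemma stepv_diff: "stepv P (\<lambda>i. f i - g i) = (\<lambda>i. stepv P f i - stepv P g i)"
  by (auto simp: stepv_def sum_subtractf right_diff_distrib)

lemma stepv_mult: "stepv P (\<lambda>i. a * f i) = (\<lambda>i. a * stepv P f i)"
  by (auto simp: stepv_def sum_distrib_left mult_ac)

lemma stepv_minus: "stepv P (\<lambda>i. - f i) = (\<lambda>i. - stepv P f i)"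
  by (auto simp: stepv_def sum_negf)

lemma stepv_sum: "stepv P (\<lambda>i. \<Sum>k\<in>A. f k i) = (\<lambda>i. \<Sum>k\<in>A. stepv P (f k) i)"
  by (auto simp: stepv_def sum_distrib_left intro: sum.swap)

lemma funpow_stepv_diff:
  "(stepv P ^^ k) (\<lambda>i. f i - g i) = (\<lambda>i. (stepv P ^^ k) f i - (stepv P ^^ k) g i)"
  by (induction k) (auto simp: stepv_diff)

lemma funpow_stepv_mult: "(stepv P ^^ k) (\<lambda>i. a * f i) = (\<lambda>i. a * (stepv P ^^ k) f i)"
  by (induction k) (auto simp: stepv_mult)

lemma funpow_stepv_minus: "(stepv P ^^ k) (\<lambda>i. - f i) = (\<lambda>i. - (stepv P ^^ k) f i)"
  by (induction k) (auto simp: stepv_minus)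

lemma stepv_mono:
  assumes "\<And>i j. 0 \<le> P i j" and "\<And>j. f j \<le> g j"
  shows "stepv P f i \<le> stepv P g i"
  unfolding stepv_def using assms by (intro sum_mono mult_left_mono) auto

lemma funpow_stepv_mono:
  assumes "\<And>i j. 0 \<le> P i j" and "\<And>j. f j \<le> g j"
  shows "(stepv P ^^ k) f i \<le> (stepv P ^^ k) g i"
proof (induction k arbitrary: i)
  case (Suc k)
  then show ?case by (simp add: stepv_mono assms(1))
qed (simp add: assms(2))

lemma stepv_abs_le:
  assumes P: "substochastic P" and f: "\<And>j. \<bar>f j\<bar> \<le> B"
  shows "\<bar>stepv P f i\<bar> \<le> B"
proof -
  have "0 \<le> B" using f[of i] by linarith
  have "\<bar>stepv P f i\<bar> \<le> (\<Sum>j\<in>UNIV. P i j * \<bar>f j\<bar>)"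
    unfolding stepv_def using sum_abs[of "\<lambda>j. P i j * f j" UNIV]
    by (simp add: abs_mult substochastic_nonneg[OF P])
  also have "\<dots> \<le> (\<Sum>j\<in>UNIV. P i j) * B"
    unfolding sum_distrib_right
    by (intro sum_mono mult_left_mono f substochastic_nonneg[OF P])
  also have "\<dots> \<le> B"
    using mult_right_mono[OF substochastic_row_sum_le[OF P] \<open>0 \<le> B\<close>] by simp
  finally show ?thesis .
qed

lemma funpow_stepv_abs_le:
  assumes P: "substochastic P" and f: "\<And>j. \<bar>f j\<bar> \<le> B"
  shows "\<bar>(stepv P ^^ k) f i\<bar> \<le> B"
proof (induction k arbitrary: i)
  case (Suc k)
  then show ?case using stepv_abs_le[OF P] by simp
qed (simp add: f)

lemma funpow_stepv_telescope:
  "(\<Sum>k<m. (stepv P ^^ k) (\<lambda>i. f i - stepv P f i) i) = f i - (stepv P ^^ m) f i"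
proof -
  have "(stepv P ^^ k) (\<lambda>i. f i - stepv P f i) i = (stepv P ^^ k) f i - (stepv P ^^ Suc k) f i" for k
    by (simp add: funpow_stepv_diff funpow_swap1)
  then show ?thesis
    using sum_lessThan_telescope'[of "\<lambda>k. (stepv P ^^ k) f i" m] by simp
qed

lemma survival_nonneg: "substochastic P \<Longrightarrow> 0 \<le> (stepv P ^^ k) (\<lambda>_. 1) i"
  using funpow_stepv_mono[of P "\<lambda>_. 0" "\<lambda>_. 1" k i]
  by (simp add: substochastic_nonneg funpow_stepv_mult[where a=0 and f="\<lambda>_. 0", simplified])

lemma survival_decseq:
  assumes P: "substochastic P"
  shows "decseq (\<lambda>k. (stepv P ^^ k) (\<lambda>_. 1) i)"
proof (rule decseq_SucI)
  fix k
  have "stepv P (\<lambda>_. 1) j \<le> 1" for j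
    using substochastic_row_sum_le[OF P] by (simp add: stepv_def)
  then have "(stepv P ^^ k) (stepv P (\<lambda>_. 1)) i \<le> (stepv P ^^ k) (\<lambda>_. 1) i"
    by (intro funpow_stepv_mono substochastic_nonneg[OF P])
  then show "(stepv P ^^ Suc k) (\<lambda>_. 1) i \<le> (stepv P ^^ k) (\<lambda>_. 1) i"
    by (simp add: funpow_swap1)
qed

lemma survival_tendsto_nonterm_prob:
  assumes P: "substochastic P"
  shows "(\<lambda>k. (stepv P ^^ k) (\<lambda>_. 1) i) \<longlonglongrightarrow> nonterm_prob P i"
  unfolding nonterm_prob_def
  by (rule LIMSEQ_decseq_INF[OF bdd_belowI survival_decseq[OF P]])
     (auto intro: survival_nonneg[OF P])

lemma nonterm_prob_nonneg: "substochastic P \<Longrightarrow> 0 \<le> nonterm_prob P i"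
  by (rule LIMSEQ_le_const[OF survival_tendsto_nonterm_prob]) (auto intro: survival_nonneg)

lemma stepv_nonterm_prob:
  assumes P: "substochastic P"
  shows "stepv P (nonterm_prob P) i = nonterm_prob P i"
proof -
  have lim: "(\<lambda>k. (stepv P ^^ k) (\<lambda>_. 1) j) \<longlonglongrightarrow> nonterm_prob P j" for j
    by (rule survival_tendsto_nonterm_prob[OF P])
  have "(\<lambda>k. \<Sum>j\<in>UNIV. P i j * (stepv P ^^ k) (\<lambda>_. 1) j) \<longlonglongrightarrow> stepv P (nonterm_prob P) i"
    unfolding stepv_def[of P "nonterm_prob P"] by (intro tendsto_intros lim)
  moreover have "(\<lambda>k. \<Sum>j\<in>UNIV. P i j * (stepv P ^^ k) (\<lambda>_. 1) j) = (\<lambda>k. (stepv P ^^ Suc k) (\<lambda>_. 1) i)"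
    by (simp add: stepv_def)
  ultimately show ?thesis
    using LIMSEQ_unique[OF _ LIMSEQ_Suc[OF lim[of i]]] by metis
qed

lemma partial_sums_bdd_below:
  assumes P: "substochastic P" and H: "\<And>i. H i - stepv P H i \<le> f i"
  shows "\<exists>B. \<forall>t i. B \<le> (\<Sum>k\<le>t. (stepv P ^^ k) f i)"
proof -
  define B where "B = (\<Sum>j\<in>UNIV. \<bar>H j\<bar>)"
  have HB: "\<bar>H j\<bar> \<le> B" for j
    unfolding B_def by (rule abs_le_sum_abs)
  have "- 2 * B \<le> (\<Sum>k\<le>t. (stepv P ^^ k) f i)" for t i
  proof -
    have "H i - (stepv P ^^ Suc t) H i = (\<Sum>k<Suc t. (stepv P ^^ k) (\<lambda>i. H i - stepv P H i) i)"
      by (rule funpow_stepv_telescope[symmetric])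
    also have "\<dots> \<le> (\<Sum>k\<le>t. (stepv P ^^ k) f i)"
      unfolding lessThan_Suc_atMost
      by (intro sum_mono funpow_stepv_mono H substochastic_nonneg[OF P])
    moreover have "\<bar>(stepv P ^^ Suc t) H i\<bar> \<le> B"
      by (rule funpow_stepv_abs_le[OF P HB])
    ultimately show ?thesis
      using HB[of i] by linarith
  qed
  then show ?thesis by blast
qed

text \<open>The expected total time before termination of a transient chain is finite; a large
  enough truncation of it decreases by at least 1/2 in one step.\<close>

lemma transient_excessive_function:
  assumes P: "substochastic P" and transient: "\<And>i. nonterm_prob P i \<le> 0"
  obtains \<zeta> where "\<And>i. 0 \<le> \<zeta> i" and "\<And>i. 1/2 \<le> \<zeta> i - stepv P \<zeta> i"
proof -
  have "\<forall>\<^sub>F k in sequentially. (stepv P ^^ k) (\<lambda>_. 1) i < 1/2" for i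
    using survival_tendsto_nonterm_prob[OF P, of i] transient[of i]
    by (intro order_tendstoD(2)) auto
  then have "\<forall>\<^sub>F k in sequentially. \<forall>i. (stepv P ^^ k) (\<lambda>_. 1) i < 1/2"
    by (rule eventually_all_finite)
  then obtain m where m: "\<And>i. (stepv P ^^ m) (\<lambda>_. 1) i < 1/2"
    by (auto simp: eventually_sequentially)
  define \<zeta> where "\<zeta> = (\<lambda>i. \<Sum>k<m. (stepv P ^^ k) (\<lambda>_. 1) i)"
  have "\<zeta> i - stepv P \<zeta> i = (\<Sum>k<m. (stepv P ^^ k) (\<lambda>_. 1) i - (stepv P ^^ Suc k) (\<lambda>_. 1) i)" for i
    by (simp add: \<zeta>_def stepv_sum sum_subtractf)
  then have "\<zeta> i - stepv P \<zeta> i = 1 - (stepv P ^^ m) (\<lambda>_. 1) i" for i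
    using sum_lessThan_telescope'[of "\<lambda>k. (stepv P ^^ k) (\<lambda>_. 1) i" m] by simp
  with m show ?thesis
    by (intro that[of \<zeta>]) (auto simp: \<zeta>_def less_imp_le survival_nonneg[OF P] intro: sum_nonneg)
qed

text \<open>Outside C the new function is h minus a large multiple of the excessive function of
  the transient matrix; on C nothing changes since P never leaves C.\<close>

lemma lyapunov_switch_outside_closed:
  assumes P: "substochastic P" and Pa: "substochastic Pa"
    and transient: "\<And>i. nonterm_prob Pa i \<le> 0"
    and closed: "\<And>i j. i \<in> C \<Longrightarrow> j \<notin> C \<Longrightarrow> P i j = 0"
    and h: "\<And>i. i \<in> C \<Longrightarrow> h i - stepv P h i \<le> f i"
  obtains H where "\<And>i. H i - stepv (\<lambda>i j. if i \<in> C then P i j else Pa i j) H i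
                          \<le> (if i \<in> C then f i else fa i)"
proof -
  obtain \<zeta> where \<zeta>_nonneg: "\<And>i. 0 \<le> \<zeta> i" and \<zeta>_dec: "\<And>i. 1/2 \<le> \<zeta> i - stepv Pa \<zeta> i"
    using transient_excessive_function[OF Pa transient] by blast
  define z where "z = (\<lambda>i. if i \<in> C then 0 else \<zeta> i)"
  define Bh where "Bh = (\<Sum>j\<in>UNIV. \<bar>h j\<bar>)"
  define Bf where "Bf = (\<Sum>j\<in>UNIV. \<bar>fa j\<bar>)"
  have hB: "\<bar>h j\<bar> \<le> Bh" for j unfolding Bh_def by (rule abs_le_sum_abs)
  have fB: "\<bar>fa j\<bar> \<le> Bf" for j unfolding Bf_def by (rule abs_le_sum_abs)
  define K where "K = 2 * (2 * Bh + Bf)"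
  have "0 \<le> K" unfolding K_def Bh_def Bf_def by (simp add: sum_nonneg)
  define H where "H = (\<lambda>i. h i - K * z i)"
  let ?Q = "\<lambda>i j. if i \<in> C then P i j else Pa i j"
  have "H i - stepv ?Q H i \<le> (if i \<in> C then f i else fa i)" for i
  proof (cases "i \<in> C")
    case True
    have "stepv P z i = 0"
      unfolding stepv_def z_def by (rule sum.neutral) (simp add: closed[OF True])
    moreover have "stepv ?Q H i = stepv P H i"
      using True by (simp add: stepv_def)
    ultimately have "stepv ?Q H i = stepv P h i"
      by (simp add: H_def stepv_diff stepv_mult)
    then show ?thesis using True h[OF True] by (simp add: H_def z_def)
  next
    case False
    have "stepv Pa z i \<le> stepv Pa \<zeta> i"
      by (rule stepv_mono[OF substochastic_nonneg[OF Pa]]) (auto simp: z_def \<zeta>_nonneg)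
    with \<zeta>_dec[of i] False have "K * (1/2) \<le> K * (z i - stepv Pa z i)"
      by (intro mult_left_mono \<open>0 \<le> K\<close>) (simp add: z_def)
    moreover have "stepv ?Q H i = stepv Pa h i - K * stepv Pa z i"
      using False by (simp add: H_def stepv_diff stepv_mult stepv_def)
    moreover have "\<bar>stepv Pa h i\<bar> \<le> Bh" by (rule stepv_abs_le[OF Pa hB])
    ultimately show ?thesis
      using False hB[of i] fB[of i] unfolding H_def K_def by (simp add: algebra_simps)
  qed
  then show ?thesis by (rule that)
qed

lemma excessive_nonneg_if_transient:
  assumes P: "substochastic P" and transient: "\<And>i. nonterm_prob P i \<le> 0"
    and excessive: "\<And>i. stepv P d i \<le> d i"
  shows "0 \<le> d i"
proof -
  define B where "B = (\<Sum>j\<in>UNIV. \<bar>d j\<bar>)"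
  have iter_le: "(stepv P ^^ k) d i \<le> d i" for k i
  proof (induction k arbitrary: i)
    case (Suc k)
    have "(stepv P ^^ k) (stepv P d) i \<le> (stepv P ^^ k) d i"
      by (intro funpow_stepv_mono excessive substochastic_nonneg[OF P])
    then show ?case using Suc[of i] by (simp add: funpow_swap1)
  qed simp
  have "- B * (stepv P ^^ k) (\<lambda>_. 1) i \<le> d i" for k
  proof -
    have "- B \<le> d j" for j
      using abs_le_sum_abs[of d j] by (simp add: B_def)
    then have "(stepv P ^^ k) (\<lambda>_. - B * 1) i \<le> (stepv P ^^ k) d i"
      by (intro funpow_stepv_mono substochastic_nonneg[OF P]) simp
    then show ?thesis
      using iter_le[of k i] by (simp only: funpow_stepv_mult)
  qed
  moreover have "(\<lambda>k. - B * (stepv P ^^ k) (\<lambda>_. 1) i) \<longlonglongrightarrow> - B * nonterm_prob P i"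
    by (intro tendsto_intros survival_tendsto_nonterm_prob[OF P])
  ultimately have "- B * nonterm_prob P i \<le> d i"
    by (intro LIMSEQ_le_const2) auto
  moreover have "nonterm_prob P i = 0"
    using transient[of i] nonterm_prob_nonneg[OF P, of i] by simp
  ultimately show ?thesis by simp
qed

section \<open>Closed classes\<close>

definition closed_class :: "('s::finite \<Rightarrow> 's \<Rightarrow> real) \<Rightarrow> 's set \<Rightarrow> bool" where
  "closed_class P C \<longleftrightarrow> C \<noteq> {} \<and> (\<forall>i\<in>C. (\<Sum>j\<in>C. P i j) = 1)"

definition minimal_closed_class :: "('s::finite \<Rightarrow> 's \<Rightarrow> real) \<Rightarrow> 's set \<Rightarrow> bool" where
  "minimal_closed_class P C \<longleftrightarrow>
     closed_class P C \<and> (\<forall>D. closed_class P D \<longrightarrow> D \<subseteq> C \<longrightarrow> D = C)"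

lemma closed_class_outside_eq_0:
  assumes P: "substochastic P" and C: "closed_class P C" and "i \<in> C" and "j \<notin> C"
  shows "P i j = 0"
proof -
  have "(\<Sum>j\<in>UNIV. P i j) = (\<Sum>j\<in>C. P i j) + (\<Sum>j\<in>-C. P i j)"
    using sum.subset_diff[of C UNIV "P i"] by (simp add: Compl_eq_Diff_UNIV)
  moreover have "(\<Sum>j\<in>C. P i j) = 1"
    using C \<open>i \<in> C\<close> by (simp add: closed_class_def)
  ultimately have "(\<Sum>j\<in>-C. P i j) \<le> 0"
    using substochastic_row_sum_le[OF P, of i] by linarith
  then have "(\<Sum>j\<in>-C. P i j) = 0"
    by (simp add: order_antisym sum_nonneg substochastic_nonneg[OF P])
  then show ?thesis
    using \<open>j \<notin> C\<close> by (simp add: sum_nonneg_eq_0_iff substochastic_nonneg[OF P])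
qed

lemma closed_class_row_sum:
  assumes P: "substochastic P" and C: "closed_class P C" and "i \<in> C"
  shows "(\<Sum>j\<in>UNIV. P i j) = 1"
proof -
  have "(\<Sum>j\<in>UNIV. P i j) = (\<Sum>j\<in>C. P i j)"
    by (rule sum.mono_neutral_right) (auto simp: closed_class_outside_eq_0[OF P C \<open>i \<in> C\<close>])
  then show ?thesis using C \<open>i \<in> C\<close> by (simp add: closed_class_def)
qed

lemma closed_class_survival:
  assumes P: "substochastic P" and C: "closed_class P C" and "i \<in> C"
  shows "1 \<le> (stepv P ^^ k) (\<lambda>_. 1) i"
  using \<open>i \<in> C\<close>
proof (induction k arbitrary: i)
  case (Suc k)
  have "(\<Sum>j\<in>C. P i j) \<le> (\<Sum>j\<in>C. P i j * (stepv P ^^ k) (\<lambda>_. 1) j)"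
    using Suc.IH substochastic_nonneg[OF P]
    by (intro sum_mono) (metis mult_left_mono mult.right_neutral)
  also have "\<dots> \<le> (\<Sum>j\<in>UNIV. P i j * (stepv P ^^ k) (\<lambda>_. 1) j)"
    by (rule sum_mono2) (auto intro: mult_nonneg_nonneg substochastic_nonneg[OF P] survival_nonneg[OF P])
  also have "\<dots> = (stepv P ^^ Suc k) (\<lambda>_. 1) i"
    by (simp add: stepv_def)
  finally show ?case
    using C Suc.prems by (simp add: closed_class_def)
qed simp

lemma nonterm_prob_closed_class:
  assumes P: "substochastic P" and C: "closed_class P C" and "i \<in> C"
  shows "1 \<le> nonterm_prob P i"
  unfolding nonterm_prob_def by (rule cINF_greatest) (auto intro: closed_class_survival[OF assms])

text \<open>If some state had a positive-probability exit from the argmax set, the fixed-point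
  equation at a maximising state would force its value below the maximum.\<close>

lemma closed_class_argmax_fixed_point:
  assumes P: "substochastic P" and fixed: "\<And>i. stepv P q i = q i"
    and pos: "0 < Max (range q)"
  shows "closed_class P {i. q i = Max (range q)}"
proof -
  define \<beta> where "\<beta> = Max (range q)"
  have q_le: "q i \<le> \<beta>" for i unfolding \<beta>_def by (rule Max_ge) auto
  have "\<beta> \<in> range q" unfolding \<beta>_def by (rule Max_in) auto
  then have C_ne: "{i. q i = \<beta>} \<noteq> {}" by auto
  have "(\<Sum>j\<in>{i. q i = \<beta>}. P l j) = 1" if l: "q l = \<beta>" for l
  proof -
    have gap_nonneg: "0 \<le> P l j * (\<beta> - q j)" for j
      using q_le[of j] substochastic_nonneg[OF P] by simp
    have "(\<Sum>j\<in>UNIV. P l j * (\<beta> - q j)) = \<beta> * (\<Sum>j\<in>UNIV. P l j) - stepv P q l"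
      by (simp add: stepv_def right_diff_distrib sum_subtractf sum_distrib_left mult.commute)
    also have "\<dots> = \<beta> * ((\<Sum>j\<in>UNIV. P l j) - 1)"
      using fixed[of l] l by (simp add: right_diff_distrib)
    finally have "(\<Sum>j\<in>UNIV. P l j * (\<beta> - q j)) = \<beta> * ((\<Sum>j\<in>UNIV. P l j) - 1)" .
    moreover have "\<beta> * ((\<Sum>j\<in>UNIV. P l j) - 1) \<le> 0"
      using pos substochastic_row_sum_le[OF P, of l] by (simp add: \<beta>_def mult_nonneg_nonpos)
    moreover have "0 \<le> (\<Sum>j\<in>UNIV. P l j * (\<beta> - q j))"
      by (rule sum_nonneg) (use gap_nonneg in auto)
    ultimately have gaps: "(\<Sum>j\<in>UNIV. P l j * (\<beta> - q j)) = 0"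
      and "\<beta> * ((\<Sum>j\<in>UNIV. P l j) - 1) = 0"
      by linarith+
    then have "(\<Sum>j\<in>UNIV. P l j) = 1" using pos by (simp add: \<beta>_def)
    have "P l j = 0" if "q j \<noteq> \<beta>" for j
    proof -
      have "P l j * (\<beta> - q j) = 0"
        using gaps gap_nonneg by (subst (asm) sum_nonneg_eq_0_iff) auto
      with that show ?thesis by simp
    qed
    then have "(\<Sum>j\<in>UNIV. P l j) = (\<Sum>j\<in>{i. q i = \<beta>}. P l j)"
      by (intro sum.mono_neutral_right) auto
    with \<open>(\<Sum>j\<in>UNIV. P l j) = 1\<close> show ?thesis by simp
  qed
  with C_ne show ?thesis
    unfolding closed_class_def \<beta>_def by simp
qed

lemma closed_class_if_nonterm_prob_pos:
  assumes P: "substochastic P" and pos: "0 < nonterm_prob P i"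
  shows "\<exists>C. closed_class P C"
proof -
  have "nonterm_prob P i \<le> Max (range (nonterm_prob P))"
    by (rule Max_ge) auto
  with pos have "0 < Max (range (nonterm_prob P))" by linarith
  then have "closed_class P {j. nonterm_prob P j = Max (range (nonterm_prob P))}"
    by (rule closed_class_argmax_fixed_point[OF P stepv_nonterm_prob[OF P]])
  then show ?thesis ..
qed

lemma exists_minimal_closed_class:
  assumes "closed_class P C0"
  shows "\<exists>C. minimal_closed_class P C"
proof -
  obtain C where C: "closed_class P C" and least: "\<And>D. closed_class P D \<Longrightarrow> card C \<le> card D"
    using ex_has_least_nat[of "closed_class P" C0 card] assms by blast
  have "D = C" if "closed_class P D" "D \<subseteq> C" for D
    using card_subset_eq[OF finite \<open>D \<subseteq> C\<close>] least[OF \<open>closed_class P D\<close>] card_mono[OF finite \<open>D \<subseteq> C\<close>]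
    by simp
  with C show ?thesis unfolding minimal_closed_class_def by blast
qed

text \<open>The positive part of an invariant z is subinvariant; since the rows of P over C sum
  to 1 it also preserves total mass, so it is invariant.\<close>

lemma closed_class_invariant_pos_part:
  assumes P: "substochastic P" and closed: "closed_class P C"
    and outside: "\<And>j. j \<notin> C \<Longrightarrow> z j = 0"
    and invariant: "\<And>j. z j = (\<Sum>i\<in>UNIV. z i * P i j)"
  shows "max (z j) 0 = (\<Sum>i\<in>UNIV. max (z i) 0 * P i j)"
proof -
  define y where "y i = max (z i) 0" for i
  have y_sub: "y j \<le> (\<Sum>i\<in>UNIV. y i * P i j)" for j
  proof -
    have "(\<Sum>i\<in>UNIV. z i * P i j) \<le> (\<Sum>i\<in>UNIV. y i * P i j)"
      by (intro sum_mono mult_right_mono) (auto simp: y_def substochastic_nonneg[OF P])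
    moreover have "0 \<le> (\<Sum>i\<in>UNIV. y i * P i j)"
      by (intro sum_nonneg) (simp add: y_def substochastic_nonneg[OF P])
    ultimately show ?thesis using invariant[of j] by (simp add: y_def)
  qed
  have "y i * (\<Sum>j\<in>UNIV. P i j) = y i" for i
    using closed_class_row_sum[OF P closed, of i] outside[of i] by (cases "i \<in> C") (auto simp: y_def)
  then have "(\<Sum>j\<in>UNIV. \<Sum>i\<in>UNIV. y i * P i j) = (\<Sum>j\<in>UNIV. y j)"
    by (subst sum.swap) (simp add: sum_distrib_left)
  then have "(\<Sum>j\<in>UNIV. (\<Sum>i\<in>UNIV. y i * P i j) - y j) = 0"
    by (simp add: sum_subtractf)
  then have "y j = (\<Sum>i\<in>UNIV. y i * P i j)"
    using y_sub by (subst (asm) sum_nonneg_eq_0_iff) auto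
  then show ?thesis by (simp add: y_def)
qed

lemma minimal_closed_class_invariant_support:
  assumes P: "substochastic P" and C: "minimal_closed_class P C"
    and outside: "\<And>j. j \<notin> C \<Longrightarrow> z j = 0"
    and invariant: "\<And>j. z j = (\<Sum>i\<in>UNIV. z i * P i j)"
  shows "{i. 0 < z i} = {} \<or> {i. 0 < z i} = C"
proof -
  have closed: "closed_class P C" using C by (simp add: minimal_closed_class_def)
  define D where "D = {i. 0 < z i}"
  have "D \<subseteq> C" using outside by (force simp: D_def)
  have "closed_class P D" if "D \<noteq> {}"
  proof -
    have "(\<Sum>j\<in>D. P i j) = 1" if "i \<in> D" for i
    proof -
      have "P i j = 0" if "j \<notin> D" for j
      proof -
        have "max (z i) 0 * P i j \<le> (\<Sum>k\<in>UNIV. max (z k) 0 * P k j)"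
          by (rule member_le_sum) (auto simp: substochastic_nonneg[OF P])
        also have "\<dots> = 0"
          using closed_class_invariant_pos_part[OF P closed outside invariant, of j] that
          by (simp add: D_def)
        finally show ?thesis
          using \<open>i \<in> D\<close> substochastic_nonneg[OF P, of i j] by (simp add: D_def mult_le_0_iff)
      qed
      then have "(\<Sum>j\<in>D. P i j) = (\<Sum>j\<in>C. P i j)"
        by (intro sum.mono_neutral_left) (use \<open>D \<subseteq> C\<close> in auto)
      then show ?thesis using closed \<open>i \<in> D\<close> \<open>D \<subseteq> C\<close> by (auto simp: closed_class_def)
    qed
    with that show ?thesis by (simp add: closed_class_def)
  qed
  then show ?thesis using C \<open>D \<subseteq> C\<close> unfolding minimal_closed_class_def D_def by blast
qed

lemma minimal_closed_class_invariant_eq_0: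
  assumes P: "substochastic P" and C: "minimal_closed_class P C"
    and outside: "\<And>j. j \<notin> C \<Longrightarrow> z j = 0"
    and invariant: "\<And>j. z j = (\<Sum>i\<in>UNIV. z i * P i j)"
    and mass: "(\<Sum>i\<in>UNIV. z i) = 0"
  shows "z j = 0"
proof -
  have pos: "{i. 0 < z i} = {} \<or> {i. 0 < z i} = C"
    by (rule minimal_closed_class_invariant_support[OF P C outside invariant])
  have "(\<Sum>i\<in>UNIV. - z i * P i j) = - z j" for j
    unfolding invariant[of j] by (simp add: sum_negf)
  then have neg: "{i. 0 < - z i} = {} \<or> {i. 0 < - z i} = C"
    using minimal_closed_class_invariant_support[OF P C, of "\<lambda>i. - z i"] outside by auto
  have "C \<noteq> {}" using C by (simp add: minimal_closed_class_def closed_class_def)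
  have "{i. 0 < z i} = {} \<or> {i. 0 < - z i} = {}"
  proof (rule ccontr)
    assume "\<not> ?thesis"
    with pos neg have "{i. 0 < z i} = C" "{i. 0 < - z i} = C" by auto
    with \<open>C \<noteq> {}\<close> show False by force
  qed
  then have "(\<forall>i. z i \<le> 0) \<or> (\<forall>i. 0 \<le> z i)"
    by (auto simp: not_less)
  then show ?thesis
  proof
    assume "\<forall>i. z i \<le> 0"
    with mass show ?thesis
      using sum_nonneg_eq_0_iff[of UNIV "\<lambda>i. - z i"] by (simp add: sum_negf)
  next
    assume "\<forall>i. 0 \<le> z i"
    with mass show ?thesis by (simp add: sum_nonneg_eq_0_iff)
  qed
qed

lemma invariant_if_annihilates_range:
  assumes "\<And>h. (\<Sum>i\<in>UNIV. z i * (h i - stepv P h i)) = 0"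
  shows "z j = (\<Sum>i\<in>UNIV. z i * P i j)"
proof -
  have "stepv P (\<lambda>k. if k = j then 1 else 0) i = P i j" for i
    by (simp add: stepv_def mult_delta_right)
  with assms[of "\<lambda>k. if k = j then 1 else 0"] show ?thesis
    by (simp add: right_diff_distrib sum_subtractf mult_delta_right)
qed

lemma subset_span_if_orthogonal_eq_0:
  fixes S V :: "'a::euclidean_space set"
  assumes V: "subspace V" and "S \<subseteq> V"
    and orth: "\<And>z. z \<in> V \<Longrightarrow> (\<And>w. w \<in> S \<Longrightarrow> orthogonal z w) \<Longrightarrow> z = 0"
  shows "V \<subseteq> span S"
proof
  fix x assume "x \<in> V"
  obtain y z where y: "y \<in> span S" and z: "\<And>w. w \<in> span S \<Longrightarrow> orthogonal z w" and "x = y + z"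
    using orthogonal_subspace_decomp_exists by blast
  have "span S \<subseteq> V" using V \<open>S \<subseteq> V\<close> by (rule span_minimal[rotated])
  with y \<open>x \<in> V\<close> \<open>x = y + z\<close> have "z \<in> V"
    by (metis V add_diff_cancel_left' subset_iff subspace_diff)
  then have "z = 0" using z[OF span_base] by (rule orth)
  with y \<open>x = y + z\<close> show "x \<in> span S" by simp
qed

text \<open>Vectors supported on C are spanned by the indicator of C and the restrictions to C of
  the vectors h - P h: a vector orthogonal to all of them would be a signed invariant measure
  on C of total mass 0.\<close>

lemma minimal_closed_class_poisson_equation:
  fixes P :: "'s::finite \<Rightarrow> 's \<Rightarrow> real"
  assumes P: "substochastic P" and C: "minimal_closed_class P C"
  obtains h g where "\<And>i. i \<in> C \<Longrightarrow> h i - stepv P h i = f i - g"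
proof -
  define A :: "real^'s \<Rightarrow> real^'s" where
    "A h = (\<chi> i. if i \<in> C then h $ i - stepv P (($) h) i else 0)" for h
  define one :: "real^'s" where "one = (\<chi> i. if i \<in> C then 1 else 0)"
  define V where "V = {v :: real^'s. \<forall>j. j \<notin> C \<longrightarrow> v $ j = 0}"
  have "linear A"
    by (rule linearI) (auto simp: A_def vec_eq_iff stepv_def sum.distrib sum_distrib_left algebra_simps)
  then have "subspace (range A)"
    by (simp add: linear_subspace_image)
  have "z = 0" if "z \<in> V" and orth: "\<And>w. w \<in> insert one (range A) \<Longrightarrow> orthogonal z w" for z
  proof -
    have z_outside: "z $ j = 0" if "j \<notin> C" for j
      using \<open>z \<in> V\<close> that by (simp add: V_def)
    have "z $ i * one $ i = z $ i" for i
      using z_outside[of i] by (cases "i \<in> C") (auto simp: one_def)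
    with orth[of one] have mass: "(\<Sum>i\<in>UNIV. z $ i) = 0"
      by (simp add: orthogonal_def inner_vec_def)
    have "(\<Sum>i\<in>UNIV. z $ i * (h i - stepv P h i)) = 0" for h
    proof -
      have "($) (\<chi> i. h i) = h" by (simp add: fun_eq_iff)
      then have "z $ i * A (\<chi> i. h i) $ i = z $ i * (h i - stepv P h i)" for i
        using z_outside[of i] by (cases "i \<in> C") (auto simp: A_def)
      with orth[of "A (\<chi> i. h i)"] show ?thesis
        by (simp add: orthogonal_def inner_vec_def)
    qed
    then have invariant: "z $ j = (\<Sum>i\<in>UNIV. z $ i * P i j)" for j
      by (rule invariant_if_annihilates_range)
    have "z $ j = 0" for j
      by (rule minimal_closed_class_invariant_eq_0[OF P C z_outside invariant mass])
    then show ?thesis by (simp add: vec_eq_iff)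
  qed
  moreover have "subspace V" and "insert one (range A) \<subseteq> V"
    unfolding V_def subspace_def by (auto simp: one_def A_def)
  ultimately have "(\<chi> i. if i \<in> C then f i else 0) \<in> span (insert one (range A))"
    using subset_span_if_orthogonal_eq_0[of V "insert one (range A)"] by (auto simp: V_def)
  moreover have "span (range A) = range A"
    using \<open>subspace (range A)\<close> by (simp add: span_eq_iff)
  ultimately obtain g where "(\<chi> i. if i \<in> C then f i else 0) - g *\<^sub>R one \<in> range A"
    by (auto simp: span_insert)
  then obtain h where h: "(\<chi> i. if i \<in> C then f i else 0) - g *\<^sub>R one = A h"
    by auto
  show ?thesis
  proof (rule that)
    fix i assume "i \<in> C"
    then show "h $ i - stepv P (($) h) i = f i - g"
      using arg_cong[OF h, of "\<lambda>v. v $ i"] by (simp add: one_def A_def)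
  qed
qed

section \<open>Stationary policies\<close>

lemma substochastic_Pmat:
  assumes "game_model U V p c" and "\<mu> \<in> Pi_SD U" and "\<nu> \<in> Pi_SD V"
  shows "substochastic (Pmat p \<mu> \<nu>)"
  using assms unfolding game_model_def Pi_SD_def substochastic_def Pmat_def by auto

lemma cost_neq_MInfty:
  assumes P: "substochastic (Pmat p \<mu> \<nu>)"
    and H: "\<And>i. H i - stepv (Pmat p \<mu> \<nu>) H i \<le> cvec c \<mu> \<nu> i"
  shows "cost p c \<mu> \<nu> i \<noteq> -\<infinity>"
proof -
  obtain B where "\<And>t. B \<le> (\<Sum>k\<le>t. (stepv (Pmat p \<mu> \<nu>) ^^ k) (cvec c \<mu> \<nu>) i)"
    using partial_sums_bdd_below[OF P H] by blast
  then have "ereal B \<le> cost p c \<mu> \<nu> i"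
    unfolding cost_def by (intro Liminf_bounded) auto
  then show ?thesis by auto
qed

lemma cost_neq_PInfty:
  assumes P: "substochastic (Pmat p \<mu> \<nu>)"
    and H: "\<And>i. H i - stepv (Pmat p \<mu> \<nu>) H i \<le> - cvec c \<mu> \<nu> i"
  shows "cost p c \<mu> \<nu> i \<noteq> \<infinity>"
proof -
  obtain B where "\<And>t. B \<le> (\<Sum>k\<le>t. (stepv (Pmat p \<mu> \<nu>) ^^ k) (\<lambda>i. - cvec c \<mu> \<nu> i) i)"
    using partial_sums_bdd_below[OF P, of H "\<lambda>i. - cvec c \<mu> \<nu> i"] H by blast
  then have "(\<Sum>k\<le>t. (stepv (Pmat p \<mu> \<nu>) ^^ k) (cvec c \<mu> \<nu>) i) \<le> - B" for t
    by (simp add: funpow_stepv_minus sum_negf le_minus_iff)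
  then have "cost p c \<mu> \<nu> i \<le> ereal (- B)"
    unfolding cost_def by (intro Liminf_le) auto
  then show ?thesis by auto
qed

lemma lsc_on_bdd_below:
  assumes A: "compact A" and f: "lsc_on A f"
  shows "\<exists>m. \<forall>a\<in>A. m \<le> f a"
proof -
  have "\<exists>S. open S \<and> a \<in> S \<and> (\<forall>u\<in>S. u \<in> A \<longrightarrow> f a - 1 < f u)" if "a \<in> A" for a
  proof -
    have "\<forall>\<^sub>F u in at a within A. f a - 1 < f u"
      using f that unfolding lsc_on_def by simp
    then obtain S where "open S" "a \<in> S" "\<forall>u\<in>S. u \<noteq> a \<longrightarrow> u \<in> A \<longrightarrow> f a - 1 < f u"
      unfolding eventually_at_topological by blast
    then show ?thesis by (intro exI[of _ S]) auto
  qed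
  then obtain S where S: "\<And>a. a \<in> A \<Longrightarrow> open (S a) \<and> a \<in> S a \<and> (\<forall>u\<in>S a. u \<in> A \<longrightarrow> f a - 1 < f u)"
    by metis
  obtain T where T: "T \<subseteq> A" "finite T" "A \<subseteq> (\<Union>a\<in>T. S a)"
    using compactE_image[OF A, of A S] S by blast
  define m where "m = Min (insert 0 ((\<lambda>a. f a - 1) ` T))"
  have "m \<le> f u" if "u \<in> A" for u
  proof -
    obtain a where a: "a \<in> T" "u \<in> S a" using T \<open>u \<in> A\<close> by blast
    have "m \<le> f a - 1" unfolding m_def using T a by (intro Min_le) auto
    moreover have "f a - 1 < f u" using S[of a] a T \<open>u \<in> A\<close> by blast
    ultimately show ?thesis by linarith
  qed
  then show ?thesis by blast
qed

lemma usc_on_bdd_above: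
  assumes A: "compact A" and f: "usc_on A f"
  shows "\<exists>M. \<forall>a\<in>A. f a \<le> M"
proof -
  have "lsc_on A (\<lambda>u. - f u)"
    unfolding lsc_on_def
  proof (intro ballI allI impI)
    fix a t assume "a \<in> A" and "t < - f a"
    then have "\<forall>\<^sub>F u in at a within A. f u < - t"
      using f unfolding usc_on_def by simp
    then show "\<forall>\<^sub>F u in at a within A. t < - f u"
      by (rule eventually_mono) linarith
  qed
  then obtain m where "\<forall>a\<in>A. m \<le> - f a" using lsc_on_bdd_below[OF A] by blast
  then show ?thesis by (intro exI[of _ "- m"]) force
qed

lemma T_pair_le_T_mu:
  assumes gm: "game_model U V p c" and mu: "\<mu> \<in> Pi_SD U" and nu: "\<nu> \<in> Pi_SD V"
  shows "T_pair p c \<mu> \<nu> x i \<le> T_mu V p c \<mu> x i"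
proof -
  have "compact (V i)" and "usc_on (V i) (\<lambda>v. c i (\<mu> i) v)"
    using gm mu by (auto simp: game_model_def Pi_SD_def)
  then obtain M where M: "\<forall>v\<in>V i. c i (\<mu> i) v \<le> M"
    using usc_on_bdd_above by blast
  define B where "B = (\<Sum>j\<in>UNIV. \<bar>x j\<bar>)"
  have "T_pair p c \<mu> \<nu>' x i \<le> M + B" if "\<nu>' \<in> Pi_SD V" for \<nu>'
  proof -
    have "\<bar>stepv (Pmat p \<mu> \<nu>') x i\<bar> \<le> B"
      by (rule stepv_abs_le[OF substochastic_Pmat[OF gm mu that]])
         (simp add: B_def abs_le_sum_abs)
    moreover have "c i (\<mu> i) (\<nu>' i) \<le> M" using M that by (auto simp: Pi_SD_def)
    ultimately show ?thesis unfolding T_pair_def cvec_def by linarith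
  qed
  then have "bdd_above ((\<lambda>\<nu>'. T_pair p c \<mu> \<nu>' x i) ` Pi_SD V)"
    by (intro bdd_aboveI) auto
  then show ?thesis
    unfolding T_mu_def by (rule cSUP_upper[OF nu])
qed

lemma T_nu_le_T_pair:
  assumes gm: "game_model U V p c" and mu: "\<mu> \<in> Pi_SD U" and nu: "\<nu> \<in> Pi_SD V"
  shows "T_nu U p c \<nu> x i \<le> T_pair p c \<mu> \<nu> x i"
proof -
  have "compact (U i)" and "lsc_on (U i) (\<lambda>u. c i u (\<nu> i))"
    using gm nu by (auto simp: game_model_def Pi_SD_def)
  then obtain m where m: "\<forall>u\<in>U i. m \<le> c i u (\<nu> i)"
    using lsc_on_bdd_below by blast
  define B where "B = (\<Sum>j\<in>UNIV. \<bar>x j\<bar>)"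
  have "m - B \<le> T_pair p c \<mu>' \<nu> x i" if "\<mu>' \<in> Pi_SD U" for \<mu>'
  proof -
    have "\<bar>stepv (Pmat p \<mu>' \<nu>) x i\<bar> \<le> B"
      by (rule stepv_abs_le[OF substochastic_Pmat[OF gm that nu]])
         (simp add: B_def abs_le_sum_abs)
    moreover have "m \<le> c i (\<mu>' i) (\<nu> i)" using m that by (auto simp: Pi_SD_def)
    ultimately show ?thesis unfolding T_pair_def cvec_def by linarith
  qed
  then have "bdd_below ((\<lambda>\<mu>'. T_pair p c \<mu>' \<nu> x i) ` Pi_SD U)"
    by (intro bdd_belowI) auto
  then show ?thesis
    unfolding T_nu_def by (rule cINF_lower[OF _ mu])
qed

lemma T_nu_fixpoint_le_T_mu_fixpoint:
  assumes gm: "game_model U V p c" and mu: "\<mu> \<in> Pi_SD U" and nu: "\<nu> \<in> Pi_SD V"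
    and proper: "\<not> prolonging p \<mu> \<nu>"
    and xbar: "xbar = T_mu V p c \<mu> xbar" and xtil: "xtil = T_nu U p c \<nu> xtil"
  shows "xtil i \<le> xbar i"
proof -
  have "stepv (Pmat p \<mu> \<nu>) (\<lambda>i. xbar i - xtil i) j \<le> xbar j - xtil j" for j
    using T_pair_le_T_mu[OF gm mu nu, of xbar j] T_nu_le_T_pair[OF gm mu nu, of xtil j]
      xbar xtil
    by (simp add: T_pair_def stepv_diff)
  then have "0 \<le> xbar i - xtil i"
    using excessive_nonneg_if_transient[OF substochastic_Pmat[OF gm mu nu], of "\<lambda>i. xbar i - xtil i"]
      proper
    by (simp add: prolonging_def not_less)
  then show ?thesis by simp
qed

lemma prolonging_if_closed_class:
  assumes P: "substochastic (Pmat p \<mu> \<nu>)" and C: "closed_class (Pmat p \<mu> \<nu>) C"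
  shows "prolonging p \<mu> \<nu>"
proof -
  obtain i where "i \<in> C" using C by (auto simp: closed_class_def)
  then have "1 \<le> nonterm_prob (Pmat p \<mu> \<nu>) i" by (rule nonterm_prob_closed_class[OF P C])
  then show ?thesis unfolding prolonging_def by (intro exI[of _ i]) simp
qed

lemma ess_proper1_no_closed_class_bounded_below:
  assumes gm: "game_model U V p c" and mu: "\<mu> \<in> Pi_SD U" and nu: "\<nu> \<in> Pi_SD V"
    and e1: "ess_proper1 V p c \<mu>" and C: "closed_class (Pmat p \<mu> \<nu>) C"
    and h: "\<And>i. i \<in> C \<Longrightarrow> h i - stepv (Pmat p \<mu> \<nu>) h i \<le> cvec c \<mu> \<nu> i"
  shows False
proof -
  obtain \<nu>' where nu': "\<nu>' \<in> Pi_SD V" and "\<not> prolonging p \<mu> \<nu>'"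
    using e1 unfolding ess_proper1_def by blast
  then have transient: "\<And>i. nonterm_prob (Pmat p \<mu> \<nu>') i \<le> 0"
    by (simp add: prolonging_def not_less)
  define \<nu>'' where "\<nu>'' i = (if i \<in> C then \<nu> i else \<nu>' i)" for i
  have nu'': "\<nu>'' \<in> Pi_SD V" using nu nu' by (auto simp: Pi_SD_def \<nu>''_def)
  have P'': "Pmat p \<mu> \<nu>'' = (\<lambda>i j. if i \<in> C then Pmat p \<mu> \<nu> i j else Pmat p \<mu> \<nu>' i j)"
    by (auto simp: fun_eq_iff Pmat_def \<nu>''_def)
  have c'': "cvec c \<mu> \<nu>'' = (\<lambda>i. if i \<in> C then cvec c \<mu> \<nu> i else cvec c \<mu> \<nu>' i)"
    by (auto simp: fun_eq_iff cvec_def \<nu>''_def)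
  obtain H where "\<And>i. H i - stepv (\<lambda>i j. if i \<in> C then Pmat p \<mu> \<nu> i j else Pmat p \<mu> \<nu>' i j) H i
                    \<le> (if i \<in> C then cvec c \<mu> \<nu> i else cvec c \<mu> \<nu>' i)"
    using lyapunov_switch_outside_closed[OF substochastic_Pmat[OF gm mu nu]
        substochastic_Pmat[OF gm mu nu'] transient
        closed_class_outside_eq_0[OF substochastic_Pmat[OF gm mu nu] C] h, where fa="cvec c \<mu> \<nu>'"]
    by blast
  then have "H i - stepv (Pmat p \<mu> \<nu>'') H i \<le> cvec c \<mu> \<nu>'' i" for i
    by (simp add: P'' c'')
  then have "cost p c \<mu> \<nu>'' i \<noteq> -\<infinity>" for i
    using cost_neq_MInfty[OF substochastic_Pmat[OF gm mu nu'']] by blast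
  moreover have "closed_class (Pmat p \<mu> \<nu>'') C"
    using C unfolding P'' closed_class_def by auto
  then have "prolonging p \<mu> \<nu>''"
    by (rule prolonging_if_closed_class[OF substochastic_Pmat[OF gm mu nu'']])
  ultimately show False using e1 nu'' unfolding ess_proper1_def by blast
qed

lemma ess_proper2_no_closed_class_bounded_above:
  assumes gm: "game_model U V p c" and mu: "\<mu> \<in> Pi_SD U" and nu: "\<nu> \<in> Pi_SD V"
    and e2: "ess_proper2 U p c \<nu>" and C: "closed_class (Pmat p \<mu> \<nu>) C"
    and h: "\<And>i. i \<in> C \<Longrightarrow> cvec c \<mu> \<nu> i \<le> h i - stepv (Pmat p \<mu> \<nu>) h i"
  shows False
proof -
  obtain \<mu>' where mu': "\<mu>' \<in> Pi_SD U" and "\<not> prolonging p \<mu>' \<nu>"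
    using e2 unfolding ess_proper2_def by blast
  then have transient: "\<And>i. nonterm_prob (Pmat p \<mu>' \<nu>) i \<le> 0"
    by (simp add: prolonging_def not_less)
  define \<mu>'' where "\<mu>'' i = (if i \<in> C then \<mu> i else \<mu>' i)" for i
  have mu'': "\<mu>'' \<in> Pi_SD U" using mu mu' by (auto simp: Pi_SD_def \<mu>''_def)
  have P'': "Pmat p \<mu>'' \<nu> = (\<lambda>i j. if i \<in> C then Pmat p \<mu> \<nu> i j else Pmat p \<mu>' \<nu> i j)"
    by (auto simp: fun_eq_iff Pmat_def \<mu>''_def)
  have c'': "- cvec c \<mu>'' \<nu> i = (if i \<in> C then - cvec c \<mu> \<nu> i else - cvec c \<mu>' \<nu> i)" for i
    by (simp add: cvec_def \<mu>''_def)
  have h': "- h i - stepv (Pmat p \<mu> \<nu>) (\<lambda>i. - h i) i \<le> - cvec c \<mu> \<nu> i" if "i \<in> C" for i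
    using h[OF that] by (simp add: stepv_minus)
  obtain H where "\<And>i. H i - stepv (\<lambda>i j. if i \<in> C then Pmat p \<mu> \<nu> i j else Pmat p \<mu>' \<nu> i j) H i
                    \<le> (if i \<in> C then - cvec c \<mu> \<nu> i else - cvec c \<mu>' \<nu> i)"
    using lyapunov_switch_outside_closed[OF substochastic_Pmat[OF gm mu nu]
        substochastic_Pmat[OF gm mu' nu] transient
        closed_class_outside_eq_0[OF substochastic_Pmat[OF gm mu nu] C] h',
        where fa="\<lambda>i. - cvec c \<mu>' \<nu> i"]
    by blast
  then have "H i - stepv (Pmat p \<mu>'' \<nu>) H i \<le> - cvec c \<mu>'' \<nu> i" for i
    by (simp add: P'' c'')
  then have "cost p c \<mu>'' \<nu> i \<noteq> \<infinity>" for i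
    using cost_neq_PInfty[OF substochastic_Pmat[OF gm mu'' nu]] by blast
  moreover have "closed_class (Pmat p \<mu>'' \<nu>) C"
    using C unfolding P'' closed_class_def by auto
  then have "prolonging p \<mu>'' \<nu>"
    by (rule prolonging_if_closed_class[OF substochastic_Pmat[OF gm mu'' nu]])
  ultimately show False using e2 mu'' unfolding ess_proper2_def by blast
qed

lemma not_prolonging_if_ess_proper:
  assumes gm: "game_model U V p c" and mu: "\<mu> \<in> Pi_SD U" and nu: "\<nu> \<in> Pi_SD V"
    and e1: "ess_proper1 V p c \<mu>" and e2: "ess_proper2 U p c \<nu>"
  shows "\<not> prolonging p \<mu> \<nu>"
proof
  assume "prolonging p \<mu> \<nu>"
  then obtain C0 where "closed_class (Pmat p \<mu> \<nu>) C0"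
    using closed_class_if_nonterm_prob_pos[OF substochastic_Pmat[OF gm mu nu]]
    unfolding prolonging_def by blast
  then obtain C where C: "minimal_closed_class (Pmat p \<mu> \<nu>) C"
    using exists_minimal_closed_class by blast
  obtain h g where h: "\<And>i. i \<in> C \<Longrightarrow> h i - stepv (Pmat p \<mu> \<nu>) h i = cvec c \<mu> \<nu> i - g"
    using minimal_closed_class_poisson_equation[OF substochastic_Pmat[OF gm mu nu] C] by metis
  have closed: "closed_class (Pmat p \<mu> \<nu>) C"
    using C by (simp add: minimal_closed_class_def)
  show False
  proof (cases "0 \<le> g")
    case True
    then show False
      using ess_proper1_no_closed_class_bounded_below[OF gm mu nu e1 closed, of h] h by force
  next
    case False
    then show False
      using ess_proper2_no_closed_class_bounded_above[OF gm mu nu e2 closed, of h] h by force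
  qed
qed

theorem lemma2p2:
  fixes U :: "'s::finite \<Rightarrow> 'u::polish_space set"
    and V :: "'s \<Rightarrow> 'v::polish_space set"
    and p :: "'s \<Rightarrow> 's \<Rightarrow> 'u \<Rightarrow> 'v \<Rightarrow> real"
    and c :: "'s \<Rightarrow> 'u \<Rightarrow> 'v \<Rightarrow> real"
    and \<mu> :: "'s \<Rightarrow> 'u" and \<nu> :: "'s \<Rightarrow> 'v"
  assumes "game_model U V p c"
    and "\<mu> \<in> Pi_SD U" and "\<nu> \<in> Pi_SD V"
    and "ess_proper1 V p c \<mu>" and "ess_proper2 U p c \<nu>"
  shows "\<not> prolonging p \<mu> \<nu> \<and>
         (\<forall>xbar xtil. xbar = T_mu V p c \<mu> xbar \<longrightarrow> xtil = T_nu U p c \<nu> xtil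
             \<longrightarrow> (\<forall>i. xbar i \<ge> xtil i))"
proof -
  have proper: "\<not> prolonging p \<mu> \<nu>"
    by (rule not_prolonging_if_ess_proper[OF assms])
  moreover have "xtil i \<le> xbar i"
    if "xbar = T_mu V p c \<mu> xbar" and "xtil = T_nu U p c \<nu> xtil" for xbar xtil i
    using T_nu_fixpoint_le_T_mu_fixpoint[OF assms(1-3) proper that] .
  ultimately show ?thesis by blast
qed

end
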